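(* For each positive integer $n\ge 4$, there exists a family of $n$ sidigraphs of order $4^n$ which are pairwise cospectral, each having only real eigenvalues, and each being strongly connected, non symmetric and non cycle balanced.
   Context: A sidigraph is a digraph (no loops, at most one arc from $u$ to $v$) with a sign $\pm1$ on each arc; its adjacency matrix has entry $\sigma(v_i,v_j)$ if there is an arc from $v_i$ to $v_j$ and $0$ otherwise, and its eigenvalues/spectrum are those of this matrix (spectrum as a multiset). Two sidigraphs are cospectral if they have the same spectrum. A sidigraph is strongly connected if its underlying digraph is. It is symmetric if whenever $(u,v)$ is an arc, $(v,u)$ is an arc with the same sign. The sign of a cycle is the product of the signs of its arcs; a sidigraph is cycle balanced if every directed cycle is positive, non cycle balanced otherwise. *)

theory Defs
  imports "Jordan_Normal_Form.Char_Poly" "HOL-Computational_Algebra.Fundamental_Theorem_Algebra"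
begin

text \<open>A sidigraph of order N: vertex set {0..<N}; the sign function
  s u v is 1 or -1 if there is an arc from u to v (with that sign), and 0 otherwise.
  No loops, at most one arc from u to v (automatic with this encoding).\<close>

definition sidigraph :: "nat \<Rightarrow> (nat \<Rightarrow> nat \<Rightarrow> int) \<Rightarrow> bool" where
  "sidigraph N s \<longleftrightarrow>
     (\<forall>u v. s u v \<in> {-1, 0, 1}) \<and>
     (\<forall>u. s u u = 0) \<and>
     (\<forall>u v. (u \<ge> N \<or> v \<ge> N) \<longrightarrow> s u v = 0)"

definition arc :: "(nat \<Rightarrow> nat \<Rightarrow> int) \<Rightarrow> nat \<Rightarrow> nat \<Rightarrow> bool" where
  "arc s u v \<longleftrightarrow> s u v \<noteq> 0"

definition adj_mat :: "nat \<Rightarrow> (nat \<Rightarrow> nat \<Rightarrow> int) \<Rightarrow> complex mat" where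
  "adj_mat N s = mat N N (\<lambda>(i, j). of_int (s i j))"

definition sd_spectrum :: "nat \<Rightarrow> (nat \<Rightarrow> nat \<Rightarrow> int) \<Rightarrow> complex multiset" where
  "sd_spectrum N s = proots (char_poly (adj_mat N s))"

definition cospectral :: "nat \<Rightarrow> (nat \<Rightarrow> nat \<Rightarrow> int) \<Rightarrow> (nat \<Rightarrow> nat \<Rightarrow> int) \<Rightarrow> bool" where
  "cospectral N s t \<longleftrightarrow> sd_spectrum N s = sd_spectrum N t"

definition real_spectrum :: "nat \<Rightarrow> (nat \<Rightarrow> nat \<Rightarrow> int) \<Rightarrow> bool" where
  "real_spectrum N s \<longleftrightarrow> (\<forall>z \<in># sd_spectrum N s. z \<in> \<real>)"

definition strongly_connected :: "nat \<Rightarrow> (nat \<Rightarrow> nat \<Rightarrow> int) \<Rightarrow> bool" where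
  "strongly_connected N s \<longleftrightarrow>
     (\<forall>u < N. \<forall>v < N. (u, v) \<in> {(x, y). arc s x y}\<^sup>*)"

definition symmetric_sd :: "(nat \<Rightarrow> nat \<Rightarrow> int) \<Rightarrow> bool" where
  "symmetric_sd s \<longleftrightarrow> (\<forall>u v. arc s u v \<longrightarrow> arc s v u \<and> s v u = s u v)"

definition dcycle :: "(nat \<Rightarrow> nat \<Rightarrow> int) \<Rightarrow> nat list \<Rightarrow> bool" where
  "dcycle s c \<longleftrightarrow> length c \<ge> 2 \<and> distinct c \<and>
     (\<forall>i < length c. arc s (c ! i) (c ! ((i + 1) mod length c)))"

definition cycle_sign :: "(nat \<Rightarrow> nat \<Rightarrow> int) \<Rightarrow> nat list \<Rightarrow> int" where
  "cycle_sign s c = (\<Prod>i < length c. s (c ! i) (c ! ((i + 1) mod length c)))"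

definition cycle_balanced :: "(nat \<Rightarrow> nat \<Rightarrow> int) \<Rightarrow> bool" where
  "cycle_balanced s \<longleftrightarrow> (\<forall>c. dcycle s c \<longrightarrow> cycle_sign s c = 1)"

definition sd_isomorphic :: "nat \<Rightarrow> (nat \<Rightarrow> nat \<Rightarrow> int) \<Rightarrow> (nat \<Rightarrow> nat \<Rightarrow> int) \<Rightarrow> bool" where
  "sd_isomorphic N s t \<longleftrightarrow>
     (\<exists>f. bij_betw f {0..<N} {0..<N} \<and> (\<forall>u < N. \<forall>v < N. t (f u) (f v) = s u v))"

end

theory Submission
  imports Defs
begin

text \<open>Take a hub 0, a sink 1 and leaves 2, ..., N - 1 with arcs 0 \<rightarrow> k \<rightarrow> 1 \<rightarrow> 0, the arcs
  k \<rightarrow> 1 carrying alternating signs. For an eigenvector with eigenvalue \<lambda> \<noteq> 0 every leaf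
  entry is determined by the entry at 1, and the hub row then sums the products of the signs
  along 0 \<rightarrow> k \<rightarrow> 1; these cancel in consecutive pairs of leaves as long as the signs of the
  arcs 0 \<rightarrow> k are constant on such pairs. Hence all eigenvalues vanish. Making the first 2i
  hub arcs negative gives sidigraphs with spectrum {0^N} that differ in their number of
  negative arcs, an isomorphism invariant; the 3-cycle 0 \<rightarrow> N - 1 \<rightarrow> 1 \<rightarrow> 0 is negative.
  Any even order N > 2n + 1 would do; 4^n is one of them.\<close>

lemma adj_mat_carrier: "adj_mat N s \<in> carrier_mat N N"
  by (simp add: adj_mat_def)

lemma adj_mat_mult_vec_nth:
  assumes "v \<in> carrier_vec N" "r < N"
  shows "(adj_mat N s *\<^sub>v v) $ r = (\<Sum>j<N. of_int (s r j) * v $ j)"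
  using assms by (simp add: adj_mat_def scalar_prod_def lessThan_atLeast0)

lemma sd_spectrum_eq_zeros:
  assumes "\<And>l. eigenvalue (adj_mat N s) l \<Longrightarrow> l = 0"
  shows "sd_spectrum N s = replicate_mset N 0"
proof -
  let ?p = "char_poly (adj_mat N s)"
  have deg: "degree ?p = N" and "coeff ?p N = 1"
    using degree_monic_char_poly[OF adj_mat_carrier] by auto
  then have "?p \<noteq> 0" by auto
  then have "set_mset (proots ?p) \<subseteq> {0}"
    using assms eigenvalue_root_char_poly[OF adj_mat_carrier] by auto
  then have "proots ?p = replicate_mset (size (proots ?p)) 0"
    by (rule set_mset_subset_singletonD)
  then show ?thesis
    unfolding sd_spectrum_def by (simp add: size_proots_complex deg)
qed

lemma sum_alternating_pairs:
  fixes f :: "nat \<Rightarrow> 'a :: ab_group_add"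
  assumes "\<And>j. f (Suc (2 * j)) = - f (2 * j)"
  shows "(\<Sum>k\<in>{2 * a..<2 * b}. f k) = 0"
proof (induction b)
  case (Suc b)
  show ?case
  proof (cases "a \<le> b")
    case True
    then have "{2 * a..<2 * Suc b} = insert (Suc (2 * b)) (insert (2 * b) {2 * a..<2 * b})"
      by auto
    then show ?thesis
      using Suc assms[of b] by simp
  qed simp
qed simp

definition negative_arcs :: "nat \<Rightarrow> (nat \<Rightarrow> nat \<Rightarrow> int) \<Rightarrow> (nat \<times> nat) set" where
  "negative_arcs N s = {(u, v). u < N \<and> v < N \<and> s u v = -1}"

lemma sd_isomorphic_card_negative_arcs:
  assumes "sd_isomorphic N s t"
  shows "card (negative_arcs N s) = card (negative_arcs N t)"
proof -
  obtain f where f: "bij_betw f {0..<N} {0..<N}"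
    and sign: "\<And>u v. u < N \<Longrightarrow> v < N \<Longrightarrow> t (f u) (f v) = s u v"
    using assms unfolding sd_isomorphic_def by blast
  let ?V = "{0..<N} \<times> {0..<N}"
  have bij: "bij_betw (map_prod f f) ?V ?V"
    using bij_betw_map_prod[OF f f] .
  have image: "map_prod f f ` negative_arcs N s = negative_arcs N t"
  proof
    show "map_prod f f ` negative_arcs N s \<subseteq> negative_arcs N t"
      using sign bij_betwE[OF f] by (auto simp: negative_arcs_def)
  next
    show "negative_arcs N t \<subseteq> map_prod f f ` negative_arcs N s"
    proof
      fix p assume p: "p \<in> negative_arcs N t"
      then have "p \<in> map_prod f f ` ?V"
        using bij_betw_imp_surj_on[OF bij] by (auto simp: negative_arcs_def)
      then obtain q where "q \<in> ?V" "p = map_prod f f q" ..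
      with p sign show "p \<in> map_prod f f ` negative_arcs N s"
        by (cases q) (auto simp: negative_arcs_def)
    qed
  qed
  have "negative_arcs N s \<subseteq> ?V"
    by (auto simp: negative_arcs_def)
  then have "bij_betw (map_prod f f) (negative_arcs N s) (negative_arcs N t)"
    by (rule bij_betw_subset[OF bij _ image])
  then show ?thesis
    by (rule bij_betw_same_card)
qed

definition hub_sign :: "nat \<Rightarrow> nat \<Rightarrow> int" where
  "hub_sign i k = (if k < 2 + 2 * i then -1 else 1)"

definition fan :: "nat \<Rightarrow> nat \<Rightarrow> nat \<Rightarrow> nat \<Rightarrow> int" where
  "fan N i u v =
     (if u = 0 \<and> 2 \<le> v \<and> v < N then hub_sign i v
      else if v = 1 \<and> 2 \<le> u \<and> u < N then (-1) ^ u
      else if u = 1 \<and> v = 0 then 1 else 0)"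

lemma sidigraph_fan: "N \<ge> 2 \<Longrightarrow> sidigraph N (fan N i)"
  by (auto simp: sidigraph_def fan_def hub_sign_def minus_one_power_iff)

lemma fan_eigenvalue_zero:
  assumes N: "even N" "N \<ge> 2" and l: "eigenvalue (adj_mat N (fan N i)) l"
  shows "l = 0"
proof (rule ccontr)
  assume "l \<noteq> 0"
  obtain v where v: "v \<in> carrier_vec N" "v \<noteq> 0\<^sub>v N" "adj_mat N (fan N i) *\<^sub>v v = l \<cdot>\<^sub>v v"
    using l unfolding eigenvalue_def eigenvector_def by (auto simp: adj_mat_def)
  have row: "(\<Sum>j<N. of_int (fan N i r j) * v $ j) = l * v $ r" if "r < N" for r
    using arg_cong[OF v(3), of "\<lambda>w. w $ r"] adj_mat_mult_vec_nth[OF v(1) that] v(1) that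
    by simp
  have "(\<Sum>j<N. of_int (fan N i 1 j) * v $ j) = (\<Sum>j<N. if j = 0 then v $ 0 else 0)"
    by (rule sum.cong) (auto simp: fan_def)
  then have "(\<Sum>j<N. of_int (fan N i 1 j) * v $ j) = v $ 0"
    using N by simp
  then have v0: "v $ 0 = l * v $ 1"
    using row[of 1] N by simp
  have leaf: "v $ k = (-1) ^ k * v $ 1 / l" if "2 \<le> k" "k < N" for k
  proof -
    have "(\<Sum>j<N. of_int (fan N i k j) * v $ j) = (\<Sum>j<N. if j = 1 then (-1) ^ k * v $ 1 else 0)"
      using that by (intro sum.cong) (auto simp: fan_def)
    then have "(\<Sum>j<N. of_int (fan N i k j) * v $ j) = (-1) ^ k * v $ 1"
      using N by simp
    then show ?thesis
      using row[of k] that \<open>l \<noteq> 0\<close> by (simp add: field_simps)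
  qed
  have "(\<Sum>j<N. of_int (fan N i 0 j) * v $ j) = (\<Sum>j\<in>{2..<N}. of_int (fan N i 0 j) * v $ j)"
    by (rule sum.mono_neutral_right) (auto simp: fan_def)
  then have "l * v $ 0 = (\<Sum>j\<in>{2..<N}. of_int (fan N i 0 j) * v $ j)"
    using row[of 0] N by simp
  also have "\<dots> = v $ 1 / l * (\<Sum>k\<in>{2..<N}. of_int (hub_sign i k * (-1) ^ k))"
    by (auto simp: fan_def leaf sum_distrib_left intro!: sum.cong)
  also have "{2..<N} = {2 * 1..<2 * (N div 2)}"
    using N by auto
  also have "(\<Sum>k\<in>{2 * 1..<2 * (N div 2)}. (of_int (hub_sign i k * (-1) ^ k) :: complex)) = 0"
    by (rule sum_alternating_pairs) (simp add: hub_sign_def; presburger)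
  finally have "v $ 0 = 0" and "v $ 1 = 0"
    using v0 \<open>l \<noteq> 0\<close> by simp_all
  then have "v $ k = 0" if "k < N" for k
    using that leaf[of k] by (cases "k < 2") (auto simp: less_2_cases_iff)
  then have "v = 0\<^sub>v N"
    using v(1) by (intro eq_vecI) auto
  with v(2) show False ..
qed

lemma sd_spectrum_fan:
  "even N \<Longrightarrow> N \<ge> 2 \<Longrightarrow> sd_spectrum N (fan N i) = replicate_mset N 0"
  using fan_eigenvalue_zero by (blast intro: sd_spectrum_eq_zeros)

lemma strongly_connected_fan:
  assumes "N \<ge> 3"
  shows "strongly_connected N (fan N i)"
  unfolding strongly_connected_def
proof (intro allI impI)
  fix u v assume "u < N" "v < N"
  let ?R = "{(x, y). arc (fan N i) x y}"
  have hub_leaf: "(0, k) \<in> ?R" and leaf_sink: "(k, 1) \<in> ?R" if "2 \<le> k" "k < N" for k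
    using that by (auto simp: arc_def fan_def hub_sign_def)
  have sink_hub: "(1, 0) \<in> ?R"
    by (simp add: arc_def fan_def)
  have to_hub: "(x, 0) \<in> ?R\<^sup>*" if "x < N" for x
  proof -
    consider "x = 0" | "x = 1" | "2 \<le> x" by linarith
    then show ?thesis
    proof cases
      case 3
      have "(x, 1) \<in> ?R"
        using 3 \<open>x < N\<close> by (rule leaf_sink)
      then show ?thesis
        by (rule converse_rtrancl_into_rtrancl[OF _ r_into_rtrancl[OF sink_hub]])
    qed (use sink_hub in auto)
  qed
  have from_hub: "(0, x) \<in> ?R\<^sup>*" if "x < N" for x
  proof -
    consider "x = 0" | "x = 1" | "2 \<le> x" by linarith
    then show ?thesis
    proof cases
      case 2
      have "(0, 2) \<in> ?R" and "(2, 1) \<in> ?R"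
        using hub_leaf[of 2] leaf_sink[of 2] assms by auto
      with 2 show ?thesis
        by (blast intro: converse_rtrancl_into_rtrancl)
    qed (use hub_leaf \<open>x < N\<close> in auto)
  qed
  show "(u, v) \<in> ?R\<^sup>*"
    using to_hub[OF \<open>u < N\<close>] from_hub[OF \<open>v < N\<close>] by (rule rtrancl_trans)
qed

lemma not_symmetric_fan:
  assumes "N \<ge> 3"
  shows "\<not> symmetric_sd (fan N i)"
proof -
  have "arc (fan N i) 0 2" and "\<not> arc (fan N i) 2 0"
    using assms by (auto simp: arc_def fan_def hub_sign_def)
  then show ?thesis
    unfolding symmetric_sd_def by blast
qed

lemma not_cycle_balanced_fan:
  assumes "even N" "2 + 2 * i < N"
  shows "\<not> cycle_balanced (fan N i)"
proof -
  let ?c = "[0, N - 1, 1]"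
  have signs: "fan N i 0 (N - 1) = 1" "fan N i (N - 1) 1 = -1" "fan N i 1 0 = 1"
    using assms by (auto simp: fan_def hub_sign_def)
  have "arc (fan N i) (?c ! j) (?c ! ((j + 1) mod 3))" if "j < 3" for j
  proof -
    have "j = 0 \<or> j = 1 \<or> j = 2"
      using that by auto
    then show ?thesis
      using signs by (auto simp: arc_def)
  qed
  then have "dcycle (fan N i) ?c"
    using assms by (simp add: dcycle_def)
  moreover have "cycle_sign (fan N i) ?c = -1"
    using signs by (simp add: cycle_sign_def lessThan_nat_numeral)
  ultimately show ?thesis
    unfolding cycle_balanced_def by fastforce
qed

lemma card_negative_arcs_fan:
  assumes "2 + 2 * i \<le> N"
  shows "card (negative_arcs N (fan N i)) = card {k\<in>{2..<N}. odd k} + 2 * i"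
proof -
  have arcs: "negative_arcs N (fan N i) =
      (\<lambda>k. (k, 1)) ` {k\<in>{2..<N}. odd k} \<union> Pair 0 ` {2..<2 + 2 * i}"
    using assms by (auto simp: negative_arcs_def fan_def hub_sign_def split: if_splits)
  moreover have "card ((\<lambda>k. (k, 1 :: nat)) ` {k\<in>{2..<N}. odd k}) = card {k\<in>{2..<N}. odd k}"
    by (rule card_image) (simp add: inj_on_def)
  moreover have "card (Pair (0 :: nat) ` {2..<2 + 2 * i}) = 2 * i"
    by (subst card_image) (auto simp: inj_on_def)
  ultimately show ?thesis
    unfolding arcs by (subst card_Un_disjoint) auto
qed

lemma fan_not_isomorphic:
  assumes "2 + 2 * i \<le> N" "2 + 2 * j \<le> N" "i \<noteq> j"
  shows "\<not> sd_isomorphic N (fan N i) (fan N j)"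
  using sd_isomorphic_card_negative_arcs card_negative_arcs_fan assms by fastforce

lemma double_add_three_le_four_power: "2 * n + 3 \<le> 4 ^ n + (2 :: nat)"
  by (induction n) auto

theorem theorem2p12:
  fixes n :: nat
  assumes "n \<ge> 4"
  shows "\<exists>G :: nat \<Rightarrow> (nat \<Rightarrow> nat \<Rightarrow> int).
           (\<forall>i < n. sidigraph (4 ^ n) (G i)
                     \<and> real_spectrum (4 ^ n) (G i)
                     \<and> strongly_connected (4 ^ n) (G i)
                     \<and> \<not> symmetric_sd (G i)
                     \<and> \<not> cycle_balanced (G i)) \<and>
           (\<forall>i < n. \<forall>j < n. cospectral (4 ^ n) (G i) (G j)) \<and>
           (\<forall>i < n. \<forall>j < n. i \<noteq> j \<longrightarrow> \<not> sd_isomorphic (4 ^ n) (G i) (G j))"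
proof -
  define N :: nat where "N = 4 ^ n"
  have "even N"
    using assms by (simp add: N_def)
  have large: "2 + 2 * i < N" if "i < n" for i
    using that double_add_three_le_four_power[of n] by (simp add: N_def)
  then have "N \<ge> 3"
    using assms by fastforce
  have spectrum: "sd_spectrum N (fan N i) = replicate_mset N 0" for i
    using sd_spectrum_fan \<open>even N\<close> \<open>N \<ge> 3\<close> by simp
  show ?thesis
    unfolding N_def[symmetric]
    using \<open>N \<ge> 3\<close> \<open>even N\<close> large
    by (intro exI[of _ "fan N"])
      (auto simp: sidigraph_fan strongly_connected_fan not_symmetric_fan
        not_cycle_balanced_fan fan_not_isomorphic less_imp_le
        real_spectrum_def cospectral_def spectrum)
qed

end
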